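(* For $x\in\mathfrak S_G$, $W\in S_\infty(G)\times S_\infty(G)$ and $c\in[G]$, the quantity $[p_n(xW)](c)-[p_n(x)](c)$ does not depend on $n$, provided $n$ is large enough that $W\in S_n(G)\times S_n(G)$. (Its common value is denoted $C_c(x,W)$.)
   Context: $G$ compact; $[G]$ its conjugacy classes. $S_n(G)=G^n\rtimes S_n$, elements $((g_1,\dots,g_n),s)$, product $((g_i),s)((h_i),t)=((g_ih_{s^{-1}(i)}),st)$. For $x=((g_i),s)$, the color of a cycle $(i_1\cdots i_r)$ of $s$ is the conjugacy class of $g_{i_r}\cdots g_{i_1}$; $[x](c)$ = number of cycles of color $c$. Canonical projection $p_{n,n+1}:S_{n+1}(G)\to S_n(G)$: for $\tilde x=((g_1,\dots,g_{n+1}),\tilde s)$, if $\tilde s(n+1)=n+1$, restrict; if $n+1$ lies in a cycle $i_1\to\cdots\to i_m\to n+1\to i_{m+1}\to\cdots\to i_r$, delete $n+1$ from the cycle and replace $(g_1,\dots,g_{n+1})$ by $(g_1,\dots,g_n)$ with $g_{i_{m+1}}$ replaced by $g_{i_{m+1}}g_{n+1}$. $\mathfrak S_G=\varprojlim S_n(G)$ is the set of sequences $x=(x_1,x_2,\dots)$, $x_n\in S_n(G)$, $p_{n,n+1}(x_{n+1})=x_n$; $p_n(x)=x_n$. $S_\infty(G)=\bigcup_nS_n(G)$ via $((g_1,\dots,g_n),s)\mapsto((g_1,\dots,g_n,e_G),s)$. For $W=(w_1,w_2)\in S_\infty(G)\times S_\infty(G)$, $xW=y$ with $y_n=w_2^{-1}x_nw_1$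 for all $n$ such that $w_1,w_2\in S_n(G)$. *)

theory Defs
  imports "HOL-Analysis.Analysis" "HOL-Algebra.Group"
begin

definition compact_group :: "('a, 'b) monoid_scheme \<Rightarrow> 'a topology \<Rightarrow> bool" where
  "compact_group G T \<longleftrightarrow> group G \<and> topspace T = carrier G \<and> compact_space T
     \<and> Hausdorff_space T
     \<and> continuous_map (prod_topology T T) T (\<lambda>(a, b). a \<otimes>\<^bsub>G\<^esub> b)
     \<and> continuous_map T T (\<lambda>a. inv\<^bsub>G\<^esub> a)"

definition conjclass :: "('a, 'b) monoid_scheme \<Rightarrow> 'a \<Rightarrow> 'a set" where
  "conjclass G a = {h \<otimes>\<^bsub>G\<^esub> a \<otimes>\<^bsub>G\<^esub> inv\<^bsub>G\<^esub> h | h. h \<in> carrier G}"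

definition conj_classes :: "('a, 'b) monoid_scheme \<Rightarrow> 'a set set" where
  "conj_classes G = conjclass G ` carrier G"

(* Elements of S_n(G) = G^n \<rtimes> S_n, represented as pairs (g, s) with
   g :: nat \<Rightarrow> 'a (the tuple (g_1,...,g_n), extended by e_G outside {1..n}) and
   s a permutation of {1..n} (identity outside).  With this representation the
   embedding S_n(G) \<subseteq> S_{n+1}(G), ((g_1..g_n),s) \<mapsto> ((g_1..g_n,e),s), is literal inclusion. *)
type_synonym 'a wr = "(nat \<Rightarrow> 'a) \<times> (nat \<Rightarrow> nat)"

definition Sn :: "('a, 'b) monoid_scheme \<Rightarrow> nat \<Rightarrow> 'a wr set" where
  "Sn G n = {(g, s). s permutes {1..n} \<and> (\<forall>i\<in>{1..n}. g i \<in> carrier G)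
                     \<and> (\<forall>i. i \<notin> {1..n} \<longrightarrow> g i = \<one>\<^bsub>G\<^esub>)}"

definition Sinf :: "('a, 'b) monoid_scheme \<Rightarrow> 'a wr set" where
  "Sinf G = (\<Union>n. Sn G n)"

definition wr_mult :: "('a, 'b) monoid_scheme \<Rightarrow> 'a wr \<Rightarrow> 'a wr \<Rightarrow> 'a wr" where
  "wr_mult G x y = (\<lambda>i. fst x i \<otimes>\<^bsub>G\<^esub> fst y (Hilbert_Choice.inv (snd x) i), snd x \<circ> snd y)"

definition wr_inv :: "('a, 'b) monoid_scheme \<Rightarrow> 'a wr \<Rightarrow> 'a wr" where
  "wr_inv G x = (\<lambda>j. inv\<^bsub>G\<^esub> (fst x (snd x j)), Hilbert_Choice.inv (snd x))"

definition cyclen :: "(nat \<Rightarrow> nat) \<Rightarrow> nat \<Rightarrow> nat" where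
  "cyclen s i = (LEAST r. 0 < r \<and> (s ^^ r) i = i)"

primrec cprod :: "('a, 'b) monoid_scheme \<Rightarrow> (nat \<Rightarrow> 'a) \<Rightarrow> (nat \<Rightarrow> nat) \<Rightarrow> nat \<Rightarrow> nat \<Rightarrow> 'a" where
  "cprod G g s i 0 = \<one>\<^bsub>G\<^esub>"
| "cprod G g s i (Suc k) = g ((s ^^ k) i) \<otimes>\<^bsub>G\<^esub> cprod G g s i k"

definition cycle_of :: "(nat \<Rightarrow> nat) \<Rightarrow> nat \<Rightarrow> nat set" where
  "cycle_of s i = {(s ^^ k) i | k. True}"

definition cycle_color :: "('a, 'b) monoid_scheme \<Rightarrow> 'a wr \<Rightarrow> nat \<Rightarrow> 'a set" where
  "cycle_color G x i = conjclass G (cprod G (fst x) (snd x) i (cyclen (snd x) i))"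

definition cnt :: "('a, 'b) monoid_scheme \<Rightarrow> nat \<Rightarrow> 'a wr \<Rightarrow> 'a set \<Rightarrow> nat" where
  "cnt G n x c = card {C. \<exists>i\<in>{1..n}. C = cycle_of (snd x) i \<and> cycle_color G x i = c}"

definition proj :: "('a, 'b) monoid_scheme \<Rightarrow> nat \<Rightarrow> 'a wr \<Rightarrow> 'a wr" where
  "proj G n x =
    (let g = fst x; s = snd x in
     if s (n+1) = n+1 then (g(n+1 := \<one>\<^bsub>G\<^esub>), s)
     else (let a = Hilbert_Choice.inv s (n+1); b = s (n+1) in
           ((g(b := g b \<otimes>\<^bsub>G\<^esub> g (n+1)))(n+1 := \<one>\<^bsub>G\<^esub>), (s(a := b))(n+1 := n+1))))"

(* \<frak>S_G = inverse limit; sequences indexed by n \<ge> 1 (the value at 0 is irrelevant) *)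
definition frakS :: "('a, 'b) monoid_scheme \<Rightarrow> (nat \<Rightarrow> 'a wr) set" where
  "frakS G = {x. (\<forall>n\<ge>1. x n \<in> Sn G n) \<and> (\<forall>n\<ge>1. proj G n (x (n+1)) = x n)}"

definition act :: "('a, 'b) monoid_scheme \<Rightarrow> (nat \<Rightarrow> 'a wr) \<Rightarrow> 'a wr \<times> 'a wr \<Rightarrow> (nat \<Rightarrow> 'a wr)" where
  "act G x W = (THE y. y \<in> frakS G \<and> y 0 = x 0 \<and>
      (\<forall>n\<ge>1. fst W \<in> Sn G n \<and> snd W \<in> Sn G n \<longrightarrow>
               y n = wr_mult G (wr_mult G (wr_inv G (snd W)) (x n)) (fst W)))"

end

theory Submission
  imports Defs "HOL-Combinatorics.Orbits" "HOL-Combinatorics.Cycles"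
begin

(* Write P = n + 1. The projection p_{n,n+1} deletes P from its cycle and multiplies its label
   into the label of the next point s(P). Every cycle through a point i ~= P keeps its points
   other than P, and its colour: for the shortened cycle through s(P) the new cycle product,
   read from s(P), is literally the old one read from P. Hence [x_{n+1}](c) exceeds [x_n](c)
   by one exactly when P is a fixed point of x_{n+1} with label in c, and by zero otherwise.
   Multiplying on either side by elements of S_n(G) commutes with p_{n,n+1} and changes neither
   whether P is fixed nor its label there, so the differences [p_n(xW)](c) - [p_n(x)](c)
   agree for n and n + 1 as soon as W lies in S_n(G) x S_n(G). *)

section \<open>Cycles of a permutation\<close>

lemma self_in_cycle_of: "i \<in> cycle_of s i"
  unfolding cycle_of_def by (auto intro: exI[of _ 0])

lemma funpow_in_cycle_of: "(s ^^ k) i \<in> cycle_of s i"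
  unfolding cycle_of_def by blast

lemma cycle_of_eq_orbit: "permutation s \<Longrightarrow> cycle_of s i = orbit s i"
  unfolding cycle_of_def by (simp add: orbit_altdef_permutation)

lemma cycle_of_eq:
  assumes "permutation s" "j \<in> cycle_of s i"
  shows "cycle_of s j = cycle_of s i"
  using assms orbit_cyclic_eq3[OF cyclic_on_orbit'] by (simp add: cycle_of_eq_orbit)

lemma cycle_of_fixpoint:
  assumes "s p = p" shows "cycle_of s p = {p}"
proof -
  have "(s ^^ k) p = p" for k by (induction k) (simp_all add: assms)
  then show ?thesis unfolding cycle_of_def by auto
qed

lemma cyclen_eq_least_power: "cyclen = least_power"
  unfolding cyclen_def least_power_def by (simp add: conj_commute)

lemma cyclen_fixpoint: "s p = p \<Longrightarrow> cyclen s p = 1"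
  unfolding cyclen_def by (rule Least_equality) auto

lemma
  assumes "permutation s"
  shows cyclen_pos: "0 < cyclen s i" and funpow_cyclen: "(s ^^ cyclen s i) i = i"
  using least_power_of_permutation[OF assms] by (simp_all add: cyclen_eq_least_power)

lemma funpow_neq_less_cyclen: "0 < k \<Longrightarrow> k < cyclen s i \<Longrightarrow> (s ^^ k) i \<noteq> i"
  unfolding cyclen_def using not_less_Least by blast

lemma cycle_of_eq_image_cyclen:
  "permutation s \<Longrightarrow> cycle_of s i = (\<lambda>k. (s ^^ k) i) ` {..<cyclen s i}"
  by (auto simp: cycle_of_eq_orbit orbit_altdef_bounded[OF funpow_cyclen cyclen_pos])

lemma cyclen_step: "inj s \<Longrightarrow> cyclen s (s i) = cyclen s i"
  unfolding cyclen_def by (metis funpow_swap1 injD)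

section \<open>Deleting a point from its cycle\<close>

definition cycle_delete :: "('a \<Rightarrow> 'a) \<Rightarrow> 'a \<Rightarrow> 'a \<Rightarrow> 'a" where
  "cycle_delete s p i = (if i = p then p else if s i = p then s p else s i)"

lemma cycle_delete_eq_transpose_comp:
  assumes "inj s"
  shows "cycle_delete s p = Transposition.transpose p (s p) \<circ> s"
  using assms by (auto simp: fun_eq_iff cycle_delete_def Transposition.transpose_def inj_eq)

lemma cycle_delete_fixpoint: "inj s \<Longrightarrow> s p = p \<Longrightarrow> cycle_delete s p = s"
  by (simp add: cycle_delete_eq_transpose_comp)

lemma permutation_cycle_delete: "permutation s \<Longrightarrow> permutation (cycle_delete s p)"
  by (simp add: cycle_delete_eq_transpose_comp permutation_bijective bij_is_inj
      permutation_compose permutation_swap_id)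

lemma permutes_cycle_delete:
  "s permutes insert p S \<Longrightarrow> cycle_delete s p permutes S"
  by (simp add: cycle_delete_eq_transpose_comp permutes_inj permutes_insert_lemma)

lemma cycle_delete_comp_left:
  assumes "inj t" "t p = p"
  shows "cycle_delete (t \<circ> s) p = t \<circ> cycle_delete s p"
  using assms by (auto simp: fun_eq_iff cycle_delete_def inj_eq)

lemma cycle_delete_comp_right:
  assumes "inj t" "t p = p"
  shows "cycle_delete (s \<circ> t) p = cycle_delete s p \<circ> t"
  using assms by (auto simp: fun_eq_iff cycle_delete_def inj_eq)

lemma inv_cycle_delete:
  assumes "bij s"
  shows "Hilbert_Choice.inv (cycle_delete s p) = Hilbert_Choice.inv s \<circ> Transposition.transpose p (s p)"
  using assms by (simp add: cycle_delete_eq_transpose_comp bij_is_inj o_inv_distrib)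

lemma funpow_cycle_delete_off_cycle:
  assumes "p \<notin> cycle_of s i"
  shows "(cycle_delete s p ^^ k) i = (s ^^ k) i"
proof (induction k)
  case (Suc k)
  have "(s ^^ k) i \<noteq> p" "s ((s ^^ k) i) \<noteq> p"
    using assms funpow_in_cycle_of[where k = k] funpow_in_cycle_of[where k = "Suc k"] by auto
  with Suc show ?case by (simp add: cycle_delete_def)
qed simp

lemma funpow_cycle_delete_on_cycle:
  assumes "Suc k < cyclen s p"
  shows "(cycle_delete s p ^^ k) (s p) = (s ^^ Suc k) p"
  using assms
proof (induction k)
  case (Suc k)
  have "(s ^^ Suc k) p \<noteq> p" "(s ^^ Suc (Suc k)) p \<noteq> p"
    using Suc.prems funpow_neq_less_cyclen[of "Suc k" s p] funpow_neq_less_cyclen[of "Suc (Suc k)" s p]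
    by simp_all
  with Suc show ?case by (simp add: cycle_delete_def)
qed simp

lemma
  assumes s: "permutation s" and moved: "s p \<noteq> p"
  shows cyclen_cycle_delete_image: "cyclen (cycle_delete s p) (s p) = cyclen s p - 1"
    and cycle_of_cycle_delete_image: "cycle_of (cycle_delete s p) (s p) = cycle_of s p - {p}"
proof -
  define L where "L = cyclen s p"
  have L: "Suc 0 < L"
    using least_power_gt_one[OF s moved] by (simp add: L_def cyclen_eq_least_power)
  have on_cycle: "(cycle_delete s p ^^ k) (s p) = (s ^^ Suc k) p" if "k < L - 1" for k
    using funpow_cycle_delete_on_cycle[of k s p] that by (simp add: L_def)
  have "(s ^^ Suc (L - 1)) p = p" "(s ^^ (L - 1)) p \<noteq> p"
    using funpow_cyclen[OF s, of p] funpow_neq_less_cyclen[of "L - 1" s p] L by (simp_all add: L_def)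
  then have "cycle_delete s p ((s ^^ (L - 1)) p) = s p"
    by (simp add: cycle_delete_def)
  moreover have "L - 1 = Suc (L - 2)" using L by simp
  ultimately have return: "(cycle_delete s p ^^ (L - 1)) (s p) = s p"
    using on_cycle[of "L - 2"] by simp
  have inj: "inj s" using s by (simp add: permutation_bijective bij_is_inj)
  show cyclen: "cyclen (cycle_delete s p) (s p) = L - 1"
    unfolding cyclen_def
  proof (rule Least_equality)
    show "0 < L - 1 \<and> (cycle_delete s p ^^ (L - 1)) (s p) = s p" using L return by simp
  next
    fix r assume r: "0 < r \<and> (cycle_delete s p ^^ r) (s p) = s p"
    show "L - 1 \<le> r"
    proof (rule ccontr)
      assume "\<not> L - 1 \<le> r"
      then have "s ((s ^^ r) p) = s p" using on_cycle[of r] r by (simp add: funpow_swap1)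
      then have "(s ^^ r) p = p" using inj by (simp add: inj_eq)
      then show False using funpow_neq_less_cyclen[of r s p] r \<open>\<not> L - 1 \<le> r\<close> by (simp add: L_def)
        linarith
    qed
  qed
  have "cycle_of (cycle_delete s p) (s p) = (\<lambda>k. (s ^^ Suc k) p) ` {..<L - 1}"
    using cycle_of_eq_image_cyclen[OF permutation_cycle_delete[OF s]] on_cycle
    by (simp add: cyclen)
  also have "\<dots> = (\<lambda>k. (s ^^ k) p) ` {..<L} - {p}"
  proof -
    have "(s ^^ Suc k) p \<noteq> p" if "k < L - 1" for k
    proof -
      have "0 < Suc k" "Suc k < cyclen s p" using that L by (simp_all add: L_def)
      then show ?thesis by (rule funpow_neq_less_cyclen)
    qed
    then have "p \<notin> (\<lambda>k. (s ^^ Suc k) p) ` {..<L - 1}" by (blast dest: sym)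
    moreover have "{..<L} = insert 0 (Suc ` {..<L - 1})"
      using lessThan_Suc_eq_insert_0[of "L - 1"] L by simp
    ultimately show ?thesis by (simp add: image_image)
  qed
  finally show "cycle_of (cycle_delete s p) (s p) = cycle_of s p - {p}"
    by (simp add: cycle_of_eq_image_cyclen[OF s] L_def)
qed

lemma cycle_of_cycle_delete:
  assumes s: "permutation s" and "i \<noteq> p"
  shows "cycle_of (cycle_delete s p) i = cycle_of s i - {p}"
proof (cases "p \<in> cycle_of s i")
  case False
  then show ?thesis
    unfolding cycle_of_def using funpow_cycle_delete_off_cycle[OF False] by auto
next
  case True
  have cycle: "cycle_of s i = cycle_of s p"
    using cycle_of_eq[OF s True] by simp
  have moved: "s p \<noteq> p"
    using cycle cycle_of_fixpoint[of s p] self_in_cycle_of[of i s] \<open>i \<noteq> p\<close> by auto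
  have "i \<in> cycle_of (cycle_delete s p) (s p)"
    using cycle self_in_cycle_of[of i s] \<open>i \<noteq> p\<close> by (simp add: cycle_of_cycle_delete_image[OF s moved])
  then have "cycle_of (cycle_delete s p) i = cycle_of (cycle_delete s p) (s p)"
    by (rule cycle_of_eq[OF permutation_cycle_delete[OF s]])
  then show ?thesis using cycle by (simp add: cycle_of_cycle_delete_image[OF s moved])
qed

section \<open>Cycle products and colours\<close>

context group
begin

lemma cprod_closed: "(\<And>i. g i \<in> carrier G) \<Longrightarrow> cprod G g s i k \<in> carrier G"
  by (induction k) auto

lemma cprod_Suc_right:
  assumes g: "\<And>i. g i \<in> carrier G"
  shows "cprod G g s i (Suc k) = cprod G g s (s i) k \<otimes> g i"
proof (induction k)
  case (Suc k)
  have "cprod G g s i (Suc (Suc k)) = g ((s ^^ k) (s i)) \<otimes> (cprod G g s (s i) k \<otimes> g i)"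
    using Suc by (simp add: funpow_swap1)
  also have "\<dots> = cprod G g s (s i) (Suc k) \<otimes> g i"
    using g cprod_closed[OF g] by (simp add: m_assoc)
  finally show ?case .
qed (simp add: g)

lemma cprod_cong:
  "(\<And>k. k < K \<Longrightarrow> g ((s ^^ k) i) = g' ((s' ^^ k) i')) \<Longrightarrow> cprod G g s i K = cprod G g' s' i' K"
  by (induction K) auto

lemma conjclass_conj:
  assumes a: "a \<in> carrier G" and h: "h \<in> carrier G"
  shows "conjclass G (h \<otimes> a \<otimes> inv h) = conjclass G a"
proof -
  have cancel: "inv h \<otimes> (h \<otimes> z) = z" if "z \<in> carrier G" for z
    using that h by (simp add: m_assoc[symmetric])
  have "k \<otimes> (h \<otimes> a \<otimes> inv h) \<otimes> inv k = (k \<otimes> h) \<otimes> a \<otimes> inv (k \<otimes> h)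
      \<and> k \<otimes> h \<in> carrier G" if "k \<in> carrier G" for k
    using that a h by (simp add: m_assoc inv_mult_group)
  moreover have "k \<otimes> a \<otimes> inv k = (k \<otimes> inv h) \<otimes> (h \<otimes> a \<otimes> inv h) \<otimes> inv (k \<otimes> inv h)
      \<and> k \<otimes> inv h \<in> carrier G" if "k \<in> carrier G" for k
    using that a h by (simp add: m_assoc inv_mult_group cancel)
  ultimately show ?thesis
    unfolding conjclass_def by blast
qed

lemma cycle_color_step:
  assumes s: "permutation s" and g: "\<And>i. g i \<in> carrier G"
  shows "cycle_color G (g, s) (s i) = cycle_color G (g, s) i"
proof -
  let ?L = "cyclen s i"
  let ?P = "cprod G g s i ?L" and ?Q = "cprod G g s (s i) ?L"
  have closed: "?P \<in> carrier G" "?Q \<in> carrier G" using cprod_closed[OF g] by auto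
  have "?Q \<otimes> g i = g i \<otimes> ?P"
    using cprod_Suc_right[of g s i ?L, OF g] funpow_cyclen[OF s, of i] by simp
  then have "?Q = g i \<otimes> ?P \<otimes> inv (g i)"
    using closed g by (simp add: inv_solve_right)
  moreover have "cyclen s (s i) = ?L"
    using s by (simp add: cyclen_step permutation_bijective bij_is_inj)
  ultimately show ?thesis
    unfolding cycle_color_def using conjclass_conj closed g by simp
qed

lemma cycle_color_eq:
  assumes s: "permutation s" and g: "\<And>i. g i \<in> carrier G" and j: "j \<in> cycle_of s i"
  shows "cycle_color G (g, s) j = cycle_color G (g, s) i"
proof -
  have "cycle_color G (g, s) ((s ^^ k) i) = cycle_color G (g, s) i" for k
    by (induction k) (simp_all add: cycle_color_step[OF s g])
  then show ?thesis using j unfolding cycle_of_def by auto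
qed

lemma cycle_color_cycle_delete_image:
  assumes s: "permutation s" and moved: "s p \<noteq> p" and g: "\<And>i. g i \<in> carrier G"
  defines "g' \<equiv> (g(s p := g (s p) \<otimes> g p))(p := \<one>)"
  shows "cycle_color G (g', cycle_delete s p) (s p) = cycle_color G (g, s) p"
proof -
  let ?d = "cycle_delete s p"
  define L where "L = cyclen s p"
  have L: "L = Suc (Suc (L - 2))"
    using least_power_gt_one[OF s moved] by (simp add: L_def cyclen_eq_least_power)
  have g': "\<And>i. g' i \<in> carrier G" using g by (simp add: g'_def)
  \<comment> \<open>both sides are \<open>g ((s ^^ (L - 1)) p) \<otimes> \<dots> \<otimes> g ((s ^^ 2) p) \<otimes> (g (s p) \<otimes> g p)\<close>\<close>
  have "cprod G g s p L = cprod G g s (s (s p)) (L - 2) \<otimes> g (s p) \<otimes> g p"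
    using L cprod_Suc_right[of g s p "Suc (L - 2)", OF g]
      cprod_Suc_right[of g s "s p" "L - 2", OF g]
    by simp
  moreover have "cprod G g' ?d (s p) (L - 1) = cprod G g' ?d (?d (s p)) (L - 2) \<otimes> g' (s p)"
    using L cprod_Suc_right[of g' ?d "s p" "L - 2", OF g'] by (metis diff_Suc_1)
  moreover have "g' (s p) = g (s p) \<otimes> g p" using moved by (simp add: g'_def)
  moreover have "cprod G g' ?d (?d (s p)) (L - 2) = cprod G g s (s (s p)) (L - 2)"
  proof (rule cprod_cong)
    fix k assume k: "k < L - 2"
    have "(?d ^^ k) (?d (s p)) = (s ^^ Suc (Suc k)) p"
      using funpow_cycle_delete_on_cycle[of "Suc k" s p] k L by (simp add: L_def funpow_swap1)
    moreover have "(s ^^ k) (s (s p)) = (s ^^ Suc (Suc k)) p" by (simp add: funpow_swap1)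
    moreover have "(s ^^ Suc (Suc k)) p \<noteq> p" "(s ^^ Suc k) p \<noteq> p"
      using funpow_neq_less_cyclen[of "Suc (Suc k)" s p] funpow_neq_less_cyclen[of "Suc k" s p] k L
      by (simp_all add: L_def)
    then have "(s ^^ Suc (Suc k)) p \<noteq> p" "(s ^^ Suc (Suc k)) p \<noteq> s p"
      using s by (simp_all add: permutation_bijective bij_is_inj inj_eq)
    ultimately show "g' ((?d ^^ k) (?d (s p))) = g ((s ^^ k) (s (s p)))" by (simp add: g'_def)
  qed
  ultimately have "cprod G g' ?d (s p) (L - 1) = cprod G g s p L"
    using g cprod_closed[OF g] by (simp add: m_assoc)
  then show ?thesis
    unfolding cycle_color_def by (simp add: cyclen_cycle_delete_image[OF s moved] L_def)
qed

lemma cycle_color_cycle_delete: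
  assumes s: "permutation s" and "i \<noteq> p" and g: "\<And>i. g i \<in> carrier G"
  shows "cycle_color G ((g(s p := g (s p) \<otimes> g p))(p := \<one>), cycle_delete s p) i
       = cycle_color G (g, s) i"
    (is "cycle_color G (?g', ?d) i = _")
proof (cases "p \<in> cycle_of s i")
  case False
  have orbit: "(?d ^^ k) i = (s ^^ k) i" for k
    by (rule funpow_cycle_delete_off_cycle[OF False])
  have "s p \<notin> cycle_of s i"
  proof
    assume "s p \<in> cycle_of s i"
    moreover have "s p \<in> cycle_of s p" using funpow_in_cycle_of[where k = 1] by simp
    ultimately have "cycle_of s p = cycle_of s i" using cycle_of_eq[OF s] by metis
    then show False using False self_in_cycle_of[of p s] by simp
  qed
  then have "?g' ((?d ^^ k) i) = g ((s ^^ k) i)" for k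
    using False funpow_in_cycle_of[where k = k and s = s and i = i] by (auto simp: orbit)
  then have "cprod G ?g' ?d i (cyclen s i) = cprod G g s i (cyclen s i)"
    by (intro cprod_cong)
  moreover have "cyclen ?d i = cyclen s i"
    unfolding cyclen_def orbit ..
  ultimately show ?thesis
    unfolding cycle_color_def by simp
next
  case True
  then have cycle: "cycle_of s i = cycle_of s p"
    using cycle_of_eq[OF s] by simp
  have moved: "s p \<noteq> p"
    using cycle cycle_of_fixpoint[of s p] self_in_cycle_of[of i s] \<open>i \<noteq> p\<close> by auto
  have "i \<in> cycle_of ?d (s p)"
    using cycle self_in_cycle_of[of i s] \<open>i \<noteq> p\<close> by (simp add: cycle_of_cycle_delete_image[OF s moved])
  then have "cycle_color G (?g', ?d) i = cycle_color G (?g', ?d) (s p)"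
    using g by (intro cycle_color_eq permutation_cycle_delete s) auto
  also have "\<dots> = cycle_color G (g, s) p"
    by (rule cycle_color_cycle_delete_image[OF s moved g])
  also have "\<dots> = cycle_color G (g, s) i"
    using True by (rule cycle_color_eq[OF s g])
  finally show ?thesis .
qed

end

section \<open>The canonical projection\<close>

lemma proj_eq_cycle_delete:
  assumes "bij s"
  shows "proj G n (g, s) = ((g(s (Suc n) := g (s (Suc n)) \<otimes>\<^bsub>G\<^esub> g (Suc n)))(Suc n := \<one>\<^bsub>G\<^esub>),
                            cycle_delete s (Suc n))"
proof (cases "s (Suc n) = Suc n")
  case True
  then show ?thesis using assms by (simp add: proj_def cycle_delete_fixpoint bij_is_inj)
next
  case False
  have "(s(Hilbert_Choice.inv s (Suc n) := s (Suc n)))(Suc n := Suc n) = cycle_delete s (Suc n)"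
    using assms by (auto simp: fun_eq_iff cycle_delete_def bij_inv_eq_iff)
  with False show ?thesis by (simp add: proj_def Let_def)
qed

lemma Sn_permutes: "(g, s) \<in> Sn G N \<Longrightarrow> s permutes {1..N}"
  unfolding Sn_def by simp

lemma Sn_outside: "(g, s) \<in> Sn G N \<Longrightarrow> i \<notin> {1..N} \<Longrightarrow> g i = \<one>\<^bsub>G\<^esub>"
  unfolding Sn_def by auto

lemma atLeastAtMost_1_Suc: "{1..Suc n} = insert (Suc n) {1..n}"
  by auto

lemma cnt_eq_card_image:
  "cnt G N (g, s) c = card (cycle_of s ` {i \<in> {1..N}. cycle_color G (g, s) i = c})"
  unfolding cnt_def by (rule arg_cong[where f = card]) auto

context group
begin

lemma Sn_mono: "N \<le> N' \<Longrightarrow> Sn G N \<subseteq> Sn G N'"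
  unfolding Sn_def by (auto intro: permutes_subset)

lemma Sn_closed: "(g, s) \<in> Sn G N \<Longrightarrow> g i \<in> carrier G"
  unfolding Sn_def by (cases "i \<in> {1..N}") auto

lemma proj_Sn:
  assumes z: "z \<in> Sn G (Suc n)"
  shows "proj G n z \<in> Sn G n"
proof -
  obtain g s where z_eq: "z = (g, s)" by fastforce
  have "s permutes {1..Suc n}" using Sn_permutes z z_eq by blast
  then have s: "s permutes insert (Suc n) {1..n}" by (simp only: atLeastAtMost_1_Suc)
  have s_top: "s (Suc n) \<in> insert (Suc n) {1..n}"
    using permutes_in_image[OF s] by simp
  let ?g' = "(g(s (Suc n) := g (s (Suc n)) \<otimes> g (Suc n)))(Suc n := \<one>)"
  have "?g' i = \<one>" if "i \<notin> {1..n}" for i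
    using that s_top Sn_outside[of g s G "Suc n" i] z z_eq by (auto simp: atLeastAtMost_1_Suc)
  moreover have "?g' i \<in> carrier G" for i
    using Sn_closed z z_eq by simp
  ultimately show ?thesis
    unfolding z_eq proj_eq_cycle_delete[OF permutes_bij[OF s]] Sn_def
    using permutes_cycle_delete[OF s] by blast
qed

lemma cnt_proj_eq_card:
  assumes z: "(g, s) \<in> Sn G (Suc n)"
  shows "cnt G n (proj G n (g, s)) c = card (cycle_of s ` {i \<in> {1..n}. cycle_color G (g, s) i = c})"
proof -
  let ?P = "Suc n"
  have sP: "s permutes {1..Suc n}" and g: "\<And>i. g i \<in> carrier G"
    using Sn_permutes Sn_closed z by auto
  have s: "permutation s" using sP by (auto simp: permutation_permutes)
  define A where "A = {i \<in> {1..n}. cycle_color G (g, s) i = c}"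
  have A_ne: "i \<noteq> ?P" if "i \<in> A" for i using that by (simp add: A_def)
  let ?g' = "(g(s ?P := g (s ?P) \<otimes> g ?P))(?P := \<one>)" and ?d = "cycle_delete s ?P"
  have "{i \<in> {1..n}. cycle_color G (?g', ?d) i = c} = A"
    using cycle_color_cycle_delete[where g = g, OF s _ g] by (auto simp: A_def)
  moreover have "cycle_of ?d ` A = (\<lambda>C. C - {?P}) ` cycle_of s ` A"
    using cycle_of_cycle_delete[OF s] A_ne by (simp add: image_image)
  ultimately have "cnt G n (proj G n (g, s)) c = card ((\<lambda>C. C - {?P}) ` cycle_of s ` A)"
    by (simp add: proj_eq_cycle_delete permutes_bij[OF sP] cnt_eq_card_image)
  also have "\<dots> = card (cycle_of s ` A)"
  proof (rule card_image, rule inj_onI, clarify)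
    fix i j assume "i \<in> A" "j \<in> A" and eq: "cycle_of s i - {?P} = cycle_of s j - {?P}"
    then have "i \<in> cycle_of s j" using self_in_cycle_of[of i s] A_ne by blast
    then show "cycle_of s i = cycle_of s j" by (rule cycle_of_eq[OF s])
  qed
  finally show ?thesis unfolding A_def .
qed

lemma cnt_proj:
  assumes z: "z \<in> Sn G (Suc n)"
  shows "cnt G (Suc n) z c = cnt G n (proj G n z) c
           + (if snd z (Suc n) = Suc n \<and> conjclass G (fst z (Suc n)) = c then 1 else 0)"
proof -
  obtain g s where z_eq: "z = (g, s)" by fastforce
  let ?P = "Suc n"
  have sP: "s permutes {1..Suc n}" and g: "\<And>i. g i \<in> carrier G"
    using Sn_permutes Sn_closed z z_eq by auto
  have s: "permutation s" using sP by (auto simp: permutation_permutes)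
  define A where "A = {i \<in> {1..n}. cycle_color G (g, s) i = c}"
  have A_ne: "i \<noteq> ?P" if "i \<in> A" for i using that by (simp add: A_def)
  have lower: "cnt G n (proj G n z) c = card (cycle_of s ` A)"
    using cnt_proj_eq_card z z_eq by (simp add: A_def)
  have top: "{i \<in> {1..Suc n}. cycle_color G (g, s) i = c}
      = (if cycle_color G (g, s) ?P = c then insert ?P A else A)"
  proof -
    have "{i \<in> insert a B. P i} = (if P a then insert a {i \<in> B. P i} else {i \<in> B. P i})"
      for a :: nat and B P by auto
    then show ?thesis unfolding A_def atLeastAtMost_1_Suc .
  qed
  have upper: "cnt G (Suc n) z c
      = card (cycle_of s ` (if cycle_color G (g, s) ?P = c then insert ?P A else A))"
    unfolding z_eq cnt_eq_card_image top ..
  have fixed_color: "cycle_color G (g, s) ?P = conjclass G (g ?P)" if "s ?P = ?P"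
    using that g by (simp add: cycle_color_def cyclen_fixpoint)
  have "finite A" by (simp add: A_def)
  show ?thesis
  proof (cases "cycle_color G (g, s) ?P = c")
    case False
    then show ?thesis
      using z_eq lower upper fixed_color by auto
  next
    case True
    show ?thesis
    proof (cases "s ?P = ?P")
      case fixed: True
      have "{?P} \<notin> cycle_of s ` A"
        using self_in_cycle_of A_ne by fastforce
      then show ?thesis
        using z_eq lower upper True fixed fixed_color cycle_of_fixpoint[of s ?P, OF fixed] \<open>finite A\<close>
        by simp
    next
      case moved: False
      have "s ?P \<in> A"
        using True moved permutes_in_image[OF sP, of ?P] cycle_color_step[where g = g, OF s g, of ?P]
        by (auto simp: A_def)
      moreover have "cycle_of s (s ?P) = cycle_of s ?P"
        using cycle_of_eq[OF s] funpow_in_cycle_of[where k = 1 and s = s and i = ?P] by simp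
      ultimately have "cycle_of s ?P \<in> cycle_of s ` A" by (metis image_eqI)
      then show ?thesis
        using z_eq lower upper True moved by (simp add: insert_absorb)
    qed
  qed
qed

lemma SnI:
  "s permutes {1..N} \<Longrightarrow> (\<And>i. g i \<in> carrier G) \<Longrightarrow> (\<And>i. i \<notin> {1..N} \<Longrightarrow> g i = \<one>)
    \<Longrightarrow> (g, s) \<in> Sn G N"
  unfolding Sn_def by auto

lemma wr_mult_Sn:
  assumes a: "a \<in> Sn G N" and b: "b \<in> Sn G N"
  shows "wr_mult G a b \<in> Sn G N"
proof -
  obtain h t g s where ab: "a = (h, t)" "b = (g, s)" by fastforce
  have t: "t permutes {1..N}" and s: "s permutes {1..N}" using a b ab Sn_permutes by auto
  show ?thesis
    unfolding ab wr_mult_def fst_conv snd_conv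
  proof (rule SnI)
    show "t \<circ> s permutes {1..N}" by (rule permutes_compose[OF s t])
    show "h i \<otimes> g (Hilbert_Choice.inv t i) \<in> carrier G" for i
      using a b ab Sn_closed by simp
    show "h i \<otimes> g (Hilbert_Choice.inv t i) = \<one>" if "i \<notin> {1..N}" for i
      using a b ab Sn_outside[of h t G N i] Sn_outside[of g s G N i] that
        permutes_not_in[OF permutes_inv[OF t] that] by simp
  qed
qed

lemma wr_inv_Sn:
  assumes a: "a \<in> Sn G N"
  shows "wr_inv G a \<in> Sn G N"
proof -
  obtain h t where a_eq: "a = (h, t)" by fastforce
  have t: "t permutes {1..N}" using a a_eq Sn_permutes by auto
  show ?thesis
    unfolding a_eq wr_inv_def fst_conv snd_conv
  proof (rule SnI)
    show "Hilbert_Choice.inv t permutes {1..N}" by (rule permutes_inv[OF t])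
    show "inv h (t i) \<in> carrier G" for i
      using a a_eq Sn_closed by simp
    show "inv h (t i) = \<one>" if "i \<notin> {1..N}" for i
      using a a_eq Sn_outside[of h t G N i] that permutes_not_in[OF t that] by simp
  qed
qed

lemma proj_wr_mult_left:
  assumes a: "a \<in> Sn G n" and z: "z \<in> Sn G (Suc n)"
  shows "proj G n (wr_mult G a z) = wr_mult G a (proj G n z)"
proof -
  obtain h t g s where az: "a = (h, t)" "z = (g, s)" by fastforce
  let ?P = "Suc n"
  have t: "t permutes {1..n}" and s: "s permutes {1..Suc n}" using a z az Sn_permutes by auto
  have g: "g i \<in> carrier G" and h: "h i \<in> carrier G" for i using a z az Sn_closed by auto
  have hP: "h ?P = \<one>" using a az Sn_outside[of h t G n ?P] by simp
  have tP: "t ?P = ?P" using permutes_not_in[OF t] by simp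
  have inv_t: "Hilbert_Choice.inv t i = j \<longleftrightarrow> i = t j" for i j
    using permutes_inverses[OF t] by metis
  have inv_tP: "Hilbert_Choice.inv t ?P = ?P" using inv_t tP by simp
  have "(\<lambda>i. h i \<otimes> g (Hilbert_Choice.inv t i))
          (t (s ?P) := h (t (s ?P)) \<otimes> g (Hilbert_Choice.inv t (t (s ?P)))
                        \<otimes> (h ?P \<otimes> g (Hilbert_Choice.inv t ?P)), ?P := \<one>)
      = (\<lambda>i. h i \<otimes> (g(s ?P := g (s ?P) \<otimes> g ?P, ?P := \<one>)) (Hilbert_Choice.inv t i))"
  proof
    fix i
    consider "i = ?P" | "i \<noteq> ?P" "i = t (s ?P)" | "i \<noteq> ?P" "i \<noteq> t (s ?P)" by blast
    then show "((\<lambda>i. h i \<otimes> g (Hilbert_Choice.inv t i))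
          (t (s ?P) := h (t (s ?P)) \<otimes> g (Hilbert_Choice.inv t (t (s ?P)))
                        \<otimes> (h ?P \<otimes> g (Hilbert_Choice.inv t ?P)), ?P := \<one>)) i
      = h i \<otimes> (g(s ?P := g (s ?P) \<otimes> g ?P, ?P := \<one>)) (Hilbert_Choice.inv t i)"
    proof cases
      case 1
      then show ?thesis using hP inv_tP by simp
    next
      case 2
      then have "s ?P \<noteq> ?P" using tP by auto
      with 2 show ?thesis using hP inv_tP g h by (simp add: permutes_inverses[OF t] m_assoc)
    next
      case 3
      then have "Hilbert_Choice.inv t i \<noteq> ?P" "Hilbert_Choice.inv t i \<noteq> s ?P"
        using inv_t tP by auto
      with 3 show ?thesis by simp
    qed
  qed
  then show ?thesis
    unfolding az wr_mult_def fst_conv snd_conv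
    using permutes_bij[OF s] permutes_bij[OF t] permutes_inj[OF t] tP
    by (simp add: proj_eq_cycle_delete bij_comp cycle_delete_comp_left)
qed

lemma proj_wr_mult_right:
  assumes a: "a \<in> Sn G n" and z: "z \<in> Sn G (Suc n)"
  shows "proj G n (wr_mult G z a) = wr_mult G (proj G n z) a"
proof -
  obtain h t g s where az: "a = (h, t)" "z = (g, s)" by fastforce
  let ?P = "Suc n"
  have t: "t permutes {1..n}" and s: "s permutes {1..Suc n}" using a z az Sn_permutes by auto
  have g: "g i \<in> carrier G" and h: "h i \<in> carrier G" for i using a z az Sn_closed by auto
  have hP: "h ?P = \<one>" using a az Sn_outside[of h t G n ?P] by simp
  have tP: "t ?P = ?P" using permutes_not_in[OF t] by simp
  have "(\<lambda>i. g i \<otimes> h (Hilbert_Choice.inv s i))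
          (s ?P := g (s ?P) \<otimes> h (Hilbert_Choice.inv s (s ?P))
                   \<otimes> (g ?P \<otimes> h (Hilbert_Choice.inv s ?P)), ?P := \<one>)
      = (\<lambda>i. (g(s ?P := g (s ?P) \<otimes> g ?P, ?P := \<one>)) i
              \<otimes> h (Hilbert_Choice.inv s (Transposition.transpose ?P (s ?P) i)))"
  proof
    fix i
    consider "i = ?P" | "i \<noteq> ?P" "i = s ?P" | "i \<noteq> ?P" "i \<noteq> s ?P" by blast
    then show "((\<lambda>i. g i \<otimes> h (Hilbert_Choice.inv s i))
          (s ?P := g (s ?P) \<otimes> h (Hilbert_Choice.inv s (s ?P))
                   \<otimes> (g ?P \<otimes> h (Hilbert_Choice.inv s ?P)), ?P := \<one>)) i
      = (g(s ?P := g (s ?P) \<otimes> g ?P, ?P := \<one>)) i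
              \<otimes> h (Hilbert_Choice.inv s (Transposition.transpose ?P (s ?P) i))"
    proof cases
      case 1
      then show ?thesis using hP by (simp add: permutes_inverses[OF s])
    next
      case 2
      then show ?thesis using hP g h by (simp add: permutes_inverses[OF s] m_assoc)
    next
      case 3
      then show ?thesis by simp
    qed
  qed
  then show ?thesis
    unfolding az wr_mult_def fst_conv snd_conv
    using permutes_bij[OF s] permutes_bij[OF t] permutes_inj[OF t] tP
    by (simp add: proj_eq_cycle_delete bij_comp cycle_delete_comp_right inv_cycle_delete)
qed

end

section \<open>Two-sided multiplication and the action on the inverse limit\<close>

definition wr_act :: "('a, 'b) monoid_scheme \<Rightarrow> 'a wr \<times> 'a wr \<Rightarrow> 'a wr \<Rightarrow> 'a wr" where
  "wr_act G W z = wr_mult G (wr_mult G (wr_inv G (snd W)) z) (fst W)"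

primrec proj_iter :: "('a, 'b) monoid_scheme \<Rightarrow> nat \<Rightarrow> nat \<Rightarrow> 'a wr \<Rightarrow> 'a wr" where
  "proj_iter G n 0 z = z"
| "proj_iter G n (Suc j) z = proj G n (proj_iter G (Suc n) j z)"

lemma frakS_proj_iter:
  assumes "x \<in> frakS G" "1 \<le> n"
  shows "proj_iter G n j (x (n + j)) = x n"
  using assms(2)
proof (induction j arbitrary: n)
  case (Suc j)
  then show ?case using assms(1) Suc.IH[of "Suc n"] by (simp add: frakS_def)
qed simp

lemma frakS_eqI:
  assumes "y \<in> frakS G" "y' \<in> frakS G" "y 0 = y' 0" "\<And>k. N \<le> k \<Longrightarrow> y k = y' k"
  shows "y = y'"
proof
  fix k
  show "y k = y' k"
  proof (cases "k = 0")
    case False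
    have "y (k + (N - k)) = y' (k + (N - k))" by (simp add: assms(4))
    then show ?thesis
      using False frakS_proj_iter[OF assms(1), of k "N - k"] frakS_proj_iter[OF assms(2), of k "N - k"]
      by simp
  qed (simp add: assms(3))
qed

context group
begin

lemma wr_act_Sn:
  "fst W \<in> Sn G N \<Longrightarrow> snd W \<in> Sn G N \<Longrightarrow> z \<in> Sn G N \<Longrightarrow> wr_act G W z \<in> Sn G N"
  unfolding wr_act_def by (intro wr_mult_Sn wr_inv_Sn)

lemma proj_wr_act:
  assumes W: "fst W \<in> Sn G n" "snd W \<in> Sn G n" and z: "z \<in> Sn G (Suc n)"
  shows "proj G n (wr_act G W z) = wr_act G W (proj G n z)"
proof -
  have "wr_inv G (snd W) \<in> Sn G (Suc n)"
    using wr_inv_Sn[OF W(2)] Sn_mono[of n "Suc n"] by auto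
  then have "wr_mult G (wr_inv G (snd W)) z \<in> Sn G (Suc n)"
    using z by (rule wr_mult_Sn)
  then show ?thesis
    unfolding wr_act_def
    by (simp add: proj_wr_mult_right[OF W(1)] proj_wr_mult_left[OF wr_inv_Sn[OF W(2)] z])
qed

lemma
  assumes W: "fst W \<in> Sn G n" "snd W \<in> Sn G n" and z: "z \<in> Sn G (Suc n)"
  shows snd_wr_act_top: "snd (wr_act G W z) (Suc n) = Suc n \<longleftrightarrow> snd z (Suc n) = Suc n"
    and fst_wr_act_top: "snd z (Suc n) = Suc n \<Longrightarrow> fst (wr_act G W z) (Suc n) = fst z (Suc n)"
proof -
  obtain h1 t1 h2 t2 g s where eqs: "W = ((h1, t1), (h2, t2))" "z = (g, s)"
    by (metis prod.collapse)
  let ?P = "Suc n"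
  have t1: "t1 permutes {1..n}" and t2: "t2 permutes {1..n}" and s: "s permutes {1..Suc n}"
    using W z eqs Sn_permutes by auto
  have inv_t2: "Hilbert_Choice.inv t2 permutes {1..n}" by (rule permutes_inv[OF t2])
  have fixed: "t1 ?P = ?P" "t2 ?P = ?P" "Hilbert_Choice.inv t2 ?P = ?P"
    using permutes_not_in[OF t1] permutes_not_in[OF t2] permutes_not_in[OF inv_t2] by auto
  have "h1 ?P = \<one>" "h2 ?P = \<one>"
    using W eqs Sn_outside[of h1 t1 G n ?P] Sn_outside[of h2 t2 G n ?P] by auto
  have snd_eq: "snd (wr_act G W z) = Hilbert_Choice.inv t2 \<circ> s \<circ> t1"
    unfolding eqs wr_act_def wr_mult_def wr_inv_def by (simp add: o_assoc)
  show "snd (wr_act G W z) ?P = ?P \<longleftrightarrow> snd z ?P = ?P"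
    unfolding snd_eq using fixed permutes_inv_eq[OF t2, of "s ?P" ?P] eqs by auto
  assume "snd z ?P = ?P"
  then have "s ?P = ?P" using eqs by simp
  have "Hilbert_Choice.inv (Hilbert_Choice.inv t2 \<circ> s) ?P = ?P"
    using permutes_inj[OF permutes_compose[OF s permutes_subset[OF inv_t2]]]
    by (intro inv_f_eq) (auto simp: \<open>s ?P = ?P\<close> fixed)
  then show "fst (wr_act G W z) ?P = fst z ?P"
    unfolding eqs wr_act_def wr_mult_def wr_inv_def
    using fixed \<open>h1 ?P = \<one>\<close> \<open>h2 ?P = \<one>\<close> z eqs Sn_closed
    by (simp add: inv_inv_eq[OF permutes_bij[OF t2]])
qed

lemma proj_iter_Sn: "z \<in> Sn G (n + j) \<Longrightarrow> proj_iter G n j z \<in> Sn G n"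
  by (induction j arbitrary: n) (auto intro: proj_Sn)

lemma proj_iter_wr_act:
  assumes "fst W \<in> Sn G n" "snd W \<in> Sn G n" "z \<in> Sn G (n + j)"
  shows "proj_iter G n j (wr_act G W z) = wr_act G W (proj_iter G n j z)"
  using assms
proof (induction j arbitrary: n)
  case (Suc j)
  have "fst W \<in> Sn G (Suc n)" "snd W \<in> Sn G (Suc n)"
    using Suc.prems Sn_mono[of n "Suc n"] by auto
  with Suc show ?case
    by (simp add: proj_wr_act proj_iter_Sn)
qed simp

lemma ex_frakS_wr_act:
  assumes x: "x \<in> frakS G" and W: "fst W \<in> Sn G N" "snd W \<in> Sn G N"
  shows "\<exists>y. y \<in> frakS G \<and> y 0 = x 0
           \<and> (\<forall>k\<ge>1. fst W \<in> Sn G k \<and> snd W \<in> Sn G k \<longrightarrow> y k = wr_act G W (x k))"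
proof -
  \<comment> \<open>below level \<open>N\<close>, where \<open>W\<close> need not act, project down from level \<open>N\<close>\<close>
  define y where
    "y k = (if k = 0 then x 0 else proj_iter G k (N - k) (wr_act G W (x (k + (N - k)))))" for k
  have W_above: "fst W \<in> Sn G (k + (N - k))" "snd W \<in> Sn G (k + (N - k))" for k
  proof -
    have "N \<le> k + (N - k)" by arith
    then show "fst W \<in> Sn G (k + (N - k))" "snd W \<in> Sn G (k + (N - k))"
      using W Sn_mono by blast+
  qed
  have x_Sn: "x k \<in> Sn G k" if "1 \<le> k" for k
    using x that by (simp add: frakS_def)
  have y_eq: "y k = wr_act G W (x k)" if "1 \<le> k" "fst W \<in> Sn G k" "snd W \<in> Sn G k" for k
    using that x_Sn[of "k + (N - k)"]
    by (simp add: y_def proj_iter_wr_act frakS_proj_iter[OF x])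
  have "y \<in> frakS G"
    unfolding frakS_def
  proof (intro CollectI conjI allI impI)
    fix k :: nat assume k: "1 \<le> k"
    show "y k \<in> Sn G k"
      using k W_above x_Sn[of "k + (N - k)"] by (simp add: y_def proj_iter_Sn wr_act_Sn)
    show "proj G k (y (k + 1)) = y k"
    proof (cases "k < N")
      case True
      then obtain j where "N - k = Suc j" "N - Suc k = j" by (metis Suc_diff_Suc)
      then show ?thesis using k by (simp add: y_def)
    next
      case False
      then have "fst W \<in> Sn G k" "snd W \<in> Sn G k" "fst W \<in> Sn G (Suc k)" "snd W \<in> Sn G (Suc k)"
        using W Sn_mono[of N k] Sn_mono[of N "Suc k"] by auto
      then show ?thesis
        using k x x_Sn[of "Suc k"] y_eq[of k] y_eq[of "Suc k"]
        by (simp add: proj_wr_act frakS_def)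
    qed
  qed
  then show ?thesis using y_eq by (auto simp: y_def)
qed

lemma act_eq_wr_act:
  assumes x: "x \<in> frakS G" and W: "fst W \<in> Sn G N" "snd W \<in> Sn G N" "1 \<le> N"
    and n: "1 \<le> n" "fst W \<in> Sn G n" "snd W \<in> Sn G n"
  shows "act G x W n = wr_act G W (x n)"
proof -
  let ?acts = "\<lambda>y. y \<in> frakS G \<and> y 0 = x 0
    \<and> (\<forall>k\<ge>1. fst W \<in> Sn G k \<and> snd W \<in> Sn G k \<longrightarrow> y k = wr_act G W (x k))"
  obtain y where y: "?acts y" using ex_frakS_wr_act[OF x W(1,2)] by blast
  have "act G x W = y"
    unfolding act_def wr_act_def[symmetric]
  proof (rule the_equality)
    show "?acts y" by (fact y)
  next
    fix y' assume y': "?acts y'"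
    show "y' = y"
    proof (rule frakS_eqI[where G = G])
      fix k assume "N \<le> k"
      then have "fst W \<in> Sn G k" "snd W \<in> Sn G k" "1 \<le> k"
        using W Sn_mono[of N k] by auto
      then show "y' k = y k" using y y' by simp
    qed (use y y' in simp_all)
  qed
  then show ?thesis using y n by simp
qed

lemma act_cnt_diff_Suc:
  assumes x: "x \<in> frakS G" and W: "fst W \<in> Sn G n" "snd W \<in> Sn G n" and n: "1 \<le> n"
  shows "int (cnt G (Suc n) (act G x W (Suc n)) c) - int (cnt G (Suc n) (x (Suc n)) c)
       = int (cnt G n (act G x W n) c) - int (cnt G n (x n) c)"
proof -
  have x_Sn: "x (Suc n) \<in> Sn G (Suc n)" and x_proj: "proj G n (x (Suc n)) = x n"
    using x n by (simp_all add: frakS_def)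
  have W': "fst W \<in> Sn G (Suc n)" "snd W \<in> Sn G (Suc n)"
    using W Sn_mono[of n "Suc n"] by auto
  have act: "act G x W n = wr_act G W (x n)" "act G x W (Suc n) = wr_act G W (x (Suc n))"
    using act_eq_wr_act[OF x W n n W] act_eq_wr_act[OF x W n _ W'] by simp_all
  show ?thesis
    unfolding act
    using cnt_proj[OF wr_act_Sn[OF W' x_Sn], of c] cnt_proj[OF x_Sn, of c]
      snd_wr_act_top[OF W x_Sn] fst_wr_act_top[OF W x_Sn]
    by (cases "snd (x (Suc n)) (Suc n) = Suc n") (simp_all add: proj_wr_act[OF W x_Sn] x_proj)
qed

end

theorem proposition4p2:
  fixes G :: "('a, 'b) monoid_scheme" and T :: "'a topology"
    and x :: "nat \<Rightarrow> 'a wr" and w1 w2 :: "'a wr" and c :: "'a set" and n m :: nat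
  assumes "compact_group G T"
    and "x \<in> frakS G"
    and "w1 \<in> Sinf G" and "w2 \<in> Sinf G"
    and "c \<in> conj_classes G"
    and "1 \<le> n" and "w1 \<in> Sn G n" and "w2 \<in> Sn G n"
    and "1 \<le> m" and "w1 \<in> Sn G m" and "w2 \<in> Sn G m"
  shows "int (cnt G n (act G x (w1, w2) n) c) - int (cnt G n (x n) c)
       = int (cnt G m (act G x (w1, w2) m) c) - int (cnt G m (x m) c)"
proof -
  interpret group G using assms(1) by (simp add: compact_group_def)
  define D where "D k = int (cnt G k (act G x (w1, w2) k) c) - int (cnt G k (x k) c)" for k
  have stable: "D k = D k0" if "k0 \<le> k" "1 \<le> k0" "w1 \<in> Sn G k0" "w2 \<in> Sn G k0" for k0 k
    using that(1)
  proof (induction k rule: dec_induct)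
    case (step k)
    then have "w1 \<in> Sn G k" "w2 \<in> Sn G k" using that Sn_mono[of k0 k] by auto
    then show ?case
      using step act_cnt_diff_Suc[OF assms(2), of "(w1, w2)" k c] that by (simp add: D_def)
  qed simp
  have "D n = D (max n m)" using stable[of n "max n m"] assms(6-8) by simp
  also have "\<dots> = D m" using stable[of m "max n m"] assms(9-11) by simp
  finally show ?thesis unfolding D_def .
qed

end
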